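(* Let $\varepsilon\in(0,\frac12]$, let $G$ be an $\varepsilon$-Ramsey-balanced graph, and let $H$ be obtained from $G$ by deleting one vertex. Then $r(G)\leq \frac{4}{\varepsilon}\cdot r(H)$.
   Context: For a graph $F$, the Ramsey number $r(F)$ is the minimum $N$ such that every two-coloring of the edges of $K_N$ contains a monochromatic copy of $F$. The edge density of an $N$-vertex graph is its number of edges divided by $\binom N2$. For $\varepsilon\in(0,\frac12]$, a two-coloring of $E(K_N)$ is $\varepsilon$-balanced if both color classes have edge density at least $\varepsilon$. A Ramsey coloring for $G$ is a two-coloring of $E(K_N)$ with $N=r(G)-1$ containing no monochromatic copy of $G$. The graph $G$ is $\varepsilon$-Ramsey-balanced if there exists a Ramsey coloring for $G$ which is $\varepsilon$-balanced. *)

theory Defs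
  imports Complex_Main
begin

definition simple_graph :: "'a set \<Rightarrow> 'a set set \<Rightarrow> bool" where
  "simple_graph V E \<longleftrightarrow> finite V \<and> (\<forall>e\<in>E. e \<subseteq> V \<and> card e = 2)"

definition KN_edges :: "nat \<Rightarrow> nat set set" where
  "KN_edges N = {e. e \<subseteq> {0..<N} \<and> card e = 2}"

definition has_mono_copy :: "nat \<Rightarrow> (nat set \<Rightarrow> bool) \<Rightarrow> 'a set \<Rightarrow> 'a set set \<Rightarrow> bool" where
  "has_mono_copy N c V E \<longleftrightarrow>
     (\<exists>b f. inj_on f V \<and> f ` V \<subseteq> {0..<N} \<and> (\<forall>e\<in>E. c (f ` e) = b))"

definition ramsey_number :: "'a set \<Rightarrow> 'a set set \<Rightarrow> nat" where
  "ramsey_number V E = (LEAST N. \<forall>c. has_mono_copy N c V E)"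

definition colour_density :: "nat \<Rightarrow> (nat set \<Rightarrow> bool) \<Rightarrow> bool \<Rightarrow> real" where
  "colour_density N c b = real (card {e \<in> KN_edges N. c e = b}) / real (N choose 2)"

definition eps_balanced :: "real \<Rightarrow> nat \<Rightarrow> (nat set \<Rightarrow> bool) \<Rightarrow> bool" where
  "eps_balanced \<epsilon> N c \<longleftrightarrow> colour_density N c True \<ge> \<epsilon> \<and> colour_density N c False \<ge> \<epsilon>"

definition ramsey_colouring :: "nat \<Rightarrow> (nat set \<Rightarrow> bool) \<Rightarrow> 'a set \<Rightarrow> 'a set set \<Rightarrow> bool" where
  "ramsey_colouring N c V E \<longleftrightarrow> N = ramsey_number V E - 1 \<and> \<not> has_mono_copy N c V E"

definition ramsey_balanced :: "real \<Rightarrow> 'a set \<Rightarrow> 'a set set \<Rightarrow> bool" where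
  "ramsey_balanced \<epsilon> V E \<longleftrightarrow>
     (\<exists>c. ramsey_colouring (ramsey_number V E - 1) c V E \<and> eps_balanced \<epsilon> (ramsey_number V E - 1) c)"

definition del_vertex_edges :: "'a set set \<Rightarrow> 'a \<Rightarrow> 'a set set" where
  "del_vertex_edges E v = {e \<in> E. v \<notin> e}"

end

(*
  Fix a colouring of K_N, N = r(G) - 1, without monochromatic G in which both colours have
  density at least \<epsilon>, and let n = r(H). A set of at least n vertices lying in the red
  neighbourhood of t and the blue neighbourhood of z contains a monochromatic H, which extends
  by t or by z to a monochromatic G; so such sets have fewer than n vertices. By averaging there
  are vertices x and y whose red neighbourhood A and blue neighbourhood B have at least
  \<epsilon>(N - 1) vertices. Every vertex of A has fewer than n red neighbours in B and every
  vertex of B fewer than n blue neighbours in A, so |A||B| - |A \<inter> B| \<le> (n - 1)(|A| + |B|),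
  which forces min(|A|, |B|) < 2n. Hence \<epsilon>(N - 1) \<le> 2n - 1, and \<epsilon> \<le> 1/2 gives
  r(G) = N + 1 \<le> 2n/\<epsilon>.
*)

theory Submission
  imports Defs "HOL-Library.Ramsey"
begin

definition mono_embedding ::
    "(nat set \<Rightarrow> bool) \<Rightarrow> nat set \<Rightarrow> 'a set \<Rightarrow> 'a set set \<Rightarrow> bool \<Rightarrow> ('a \<Rightarrow> nat) \<Rightarrow> bool" where
  "mono_embedding c S V E b f \<longleftrightarrow> inj_on f V \<and> f ` V \<subseteq> S \<and> (\<forall>e\<in>E. c (f ` e) = b)"

lemma has_mono_copy_iff_mono_embedding:
  "has_mono_copy N c V E \<longleftrightarrow> (\<exists>b f. mono_embedding c {0..<N} V E b f)"
  by (simp add: has_mono_copy_def mono_embedding_def)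

lemma mono_embedding_subset:
  "mono_embedding c S V E b f \<Longrightarrow> S \<subseteq> T \<Longrightarrow> mono_embedding c T V E b f"
  by (auto simp: mono_embedding_def)

lemma simple_graph_del_vertex:
  "simple_graph V E \<Longrightarrow> simple_graph (V - {v}) (del_vertex_edges E v)"
  by (auto simp: simple_graph_def del_vertex_edges_def)

lemma ex_mono_embedding_onto_mono_set:
  assumes G: "simple_graph V E" and R: "finite R" "card R = card V"
    and mono: "\<And>e. e \<subseteq> R \<Longrightarrow> card e = 2 \<Longrightarrow> c e = b"
  shows "\<exists>f. mono_embedding c R V E b f"
proof -
  have "finite V" using G by (simp add: simple_graph_def)
  then obtain g where g: "bij_betw g V R"
    using finite_same_card_bij R by metis
  have "c (g ` e) = b" if "e \<in> E" for e
  proof (rule mono)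
    have e: "e \<subseteq> V" "card e = 2" using G that by (auto simp: simple_graph_def)
    show "g ` e \<subseteq> R" using g e by (auto simp: bij_betw_def)
    show "card (g ` e) = 2"
      using e g by (metis bij_betw_def card_image inj_on_subset)
  qed
  then show ?thesis using g by (auto simp: mono_embedding_def bij_betw_def)
qed

lemma ex_all_has_mono_copy:
  assumes G: "simple_graph V E"
  shows "\<exists>N. \<forall>c. has_mono_copy N c V E"
proof -
  obtain r where r: "\<forall>(S::nat set) (F::nat set set). finite S \<and> r \<le> card S \<longrightarrow>
      (\<exists>R \<subseteq> S. card R = card V \<and> clique R F \<or> card R = card V \<and> indep R F)"
    using ramsey2[of "card V" "card V"] by blast
  have "has_mono_copy r c V E" for c
  proof -
    obtain R where R: "R \<subseteq> {0..<r}" "card R = card V" "clique R {e. c e} \<or> indep R {e. c e}"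
      using r[rule_format, of "{0..<r}" "{e. c e}"] by auto
    have "finite R" using R(1) finite_subset by blast
    have edge: "\<exists>x\<in>R. \<exists>y\<in>R. x \<noteq> y \<and> e = {x, y}" if "e \<subseteq> R" "card e = 2" for e
      using that by (auto simp: card_2_iff)
    obtain b where "\<And>e. e \<subseteq> R \<Longrightarrow> card e = 2 \<Longrightarrow> c e = b"
    proof (cases "clique R {e. c e}")
      case True
      then show ?thesis by (intro that[of True]) (auto dest!: edge simp: clique_def)
    next
      case False
      then show ?thesis using R(3) by (intro that[of False]) (auto dest!: edge simp: indep_def)
    qed
    with \<open>finite R\<close> R(2) obtain f where "mono_embedding c R V E b f"
      using ex_mono_embedding_onto_mono_set[OF G] by blast
    then have "mono_embedding c {0..<r} V E b f" using R(1) by (rule mono_embedding_subset)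
    then show ?thesis by (auto simp: has_mono_copy_iff_mono_embedding)
  qed
  then show ?thesis by blast
qed

lemma has_mono_copy_ramsey_number:
  "simple_graph V E \<Longrightarrow> has_mono_copy (ramsey_number V E) c V E"
  unfolding ramsey_number_def using LeastI_ex[OF ex_all_has_mono_copy] by blast

lemma ex_mono_embedding_into_set:
  assumes all: "\<And>c. has_mono_copy n c V E" and S: "finite S" "n \<le> card S"
  shows "\<exists>b f. mono_embedding c S V E b f"
proof -
  obtain g where g: "inj_on g {0..<n}" "g ` {0..<n} \<subseteq> S"
    using card_le_inj[of "{0..<n}" S] S by auto
  obtain b f where f: "mono_embedding (\<lambda>e. c (g ` e)) {0..<n} V E b f"
    using all[of "\<lambda>e. c (g ` e)"] by (auto simp: has_mono_copy_iff_mono_embedding)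
  then have "mono_embedding c S V E b (g \<circ> f)"
    using g by (auto simp: mono_embedding_def image_comp intro: comp_inj_on inj_on_subset)
  then show ?thesis by blast
qed

lemma mono_embedding_insert_vertex:
  assumes G: "simple_graph V E" and "v \<in> V"
    and f: "mono_embedding c S (V - {v}) (del_vertex_edges E v) b f"
    and z: "z \<notin> S" "\<And>s. s \<in> S \<Longrightarrow> c {z, s} = b"
  shows "mono_embedding c (insert z S) V E b (f(v := z))"
proof -
  have "inj_on (f(v := z)) (insert v (V - {v}))"
    using f z(1) by (auto simp: mono_embedding_def inj_on_insert inj_on_def)
  then have "inj_on (f(v := z)) V" by (simp add: insert_absorb \<open>v \<in> V\<close>)
  moreover have "c ((f(v := z)) ` e) = b" if e: "e \<in> E" for e
  proof (cases "v \<in> e")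
    case False
    then have "(f(v := z)) ` e = f ` e" by (intro image_cong) auto
    then show ?thesis using f e False by (simp add: mono_embedding_def del_vertex_edges_def)
  next
    case True
    obtain u where u: "u \<in> V - {v}" "e = {v, u}"
      using G e True by (fastforce simp: simple_graph_def card_2_iff)
    then have "(f(v := z)) ` e = {z, f u}" by auto
    moreover have "f u \<in> S" using f u(1) by (auto simp: mono_embedding_def)
    ultimately show ?thesis using z(2) by simp
  qed
  moreover have "(f(v := z)) ` V \<subseteq> insert z S"
    using f by (auto simp: mono_embedding_def)
  ultimately show ?thesis unfolding mono_embedding_def by blast
qed

definition colour_nbhd :: "nat \<Rightarrow> (nat set \<Rightarrow> bool) \<Rightarrow> bool \<Rightarrow> nat \<Rightarrow> nat set" where
  "colour_nbhd N c b x = {y \<in> {0..<N}. y \<noteq> x \<and> c {x, y} = b}"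

lemma card_colour_nbhd_Int_less:
  assumes G: "simple_graph V E" "v \<in> V" and no_copy: "\<not> has_mono_copy N c V E"
    and H: "\<And>c. has_mono_copy n c (V - {v}) (del_vertex_edges E v)"
    and "t < N" "z < N"
  shows "card (colour_nbhd N c b t \<inter> colour_nbhd N c (\<not> b) z) < n"
proof (rule ccontr)
  define S where "S = colour_nbhd N c b t \<inter> colour_nbhd N c (\<not> b) z"
  assume "\<not> card S < n"
  moreover have "finite S" by (simp add: S_def colour_nbhd_def)
  ultimately obtain b' f where f: "mono_embedding c S (V - {v}) (del_vertex_edges E v) b' f"
    using ex_mono_embedding_into_set[OF H] by (meson not_less)
  obtain w where w: "w < N" "w \<notin> S" "\<And>s. s \<in> S \<Longrightarrow> c {w, s} = b'"
  proof (cases "b' = b")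
    case True
    then show ?thesis using \<open>t < N\<close> by (intro that[of t]) (auto simp: S_def colour_nbhd_def)
  next
    case False
    then show ?thesis using \<open>z < N\<close> by (intro that[of z]) (auto simp: S_def colour_nbhd_def)
  qed
  have "mono_embedding c (insert w S) V E b' (f(v := w))"
    using mono_embedding_insert_vertex[OF G f w(2)] w(3) by blast
  moreover have "insert w S \<subseteq> {0..<N}" using w(1) by (auto simp: S_def colour_nbhd_def)
  ultimately show False
    using no_copy mono_embedding_subset by (metis has_mono_copy_iff_mono_embedding)
qed

lemma sum_card_colour_nbhd:
  "(\<Sum>x<N. card (colour_nbhd N c b x)) = 2 * card {e \<in> KN_edges N. c e = b}"
proof -
  define Eb where "Eb = {e \<in> KN_edges N. c e = b}"
  have "card (colour_nbhd N c b x) = card {e \<in> Eb. x \<in> e}" if "x < N" for x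
  proof -
    have "{e \<in> Eb. x \<in> e} = (\<lambda>y. {x, y}) ` colour_nbhd N c b x"
      using that by (auto simp: Eb_def KN_edges_def colour_nbhd_def card_2_iff insert_commute)
    moreover have "inj_on (\<lambda>y. {x, y}) (colour_nbhd N c b x)"
      by (auto simp: inj_on_def doubleton_eq_iff)
    ultimately show ?thesis by (simp add: card_image)
  qed
  then have "(\<Sum>x<N. card (colour_nbhd N c b x)) = (\<Sum>x<N. card {e \<in> Eb. x \<in> e})"
    by simp
  also have "\<dots> = 2 * card Eb"
  proof (rule sum_multicount)
    show "finite Eb" by (simp add: Eb_def KN_edges_def finite_subset[of _ "Pow {0..<N}"])
    show "\<forall>e\<in>Eb. card {x \<in> {..<N}. x \<in> e} = 2"
    proof
      fix e assume "e \<in> Eb"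
      then have "{x \<in> {..<N}. x \<in> e} = e" "card e = 2" by (auto simp: Eb_def KN_edges_def)
      then show "card {x \<in> {..<N}. x \<in> e} = 2" by simp
    qed
  qed simp
  finally show ?thesis by (simp add: Eb_def)
qed

lemma two_times_choose_two: "2 * (n choose 2) = n * (n - 1)"
  by (cases n) (simp_all add: choose_two)

lemma ex_card_colour_nbhd_ge:
  assumes "0 < \<epsilon>" "\<epsilon> \<le> colour_density N c b"
  shows "2 \<le> N \<and> (\<exists>x<N. \<epsilon> * (real N - 1) \<le> real (card (colour_nbhd N c b x)))"
proof -
  have "2 \<le> N"
  proof (rule ccontr)
    assume "\<not> 2 \<le> N"
    then have "colour_density N c b = 0" by (simp add: colour_density_def)
    then show False using assms by simp
  qed
  then have "0 < N choose 2" by (simp add: zero_less_binomial_iff)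
  then have "\<epsilon> * real (N choose 2) \<le> real (card {e \<in> KN_edges N. c e = b})"
    using assms(2) by (simp add: colour_density_def pos_le_divide_eq)
  moreover have "real N * (real N - 1) = 2 * real (N choose 2)"
  proof -
    have "real (N * (N - 1)) = real (2 * (N choose 2))" by (simp only: two_times_choose_two)
    then show ?thesis using \<open>2 \<le> N\<close> by (simp add: of_nat_diff)
  qed
  moreover have "(\<Sum>x<N. real (card (colour_nbhd N c b x))) = 2 * real (card {e \<in> KN_edges N. c e = b})"
    unfolding of_nat_sum[symmetric] sum_card_colour_nbhd by simp
  ultimately have sum_ge: "real N * (\<epsilon> * (real N - 1)) \<le> (\<Sum>x<N. real (card (colour_nbhd N c b x)))"
    by (simp add: mult.left_commute)
  show ?thesis
  proof (rule conjI[OF \<open>2 \<le> N\<close>], rule ccontr)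
    assume "\<not> (\<exists>x<N. \<epsilon> * (real N - 1) \<le> real (card (colour_nbhd N c b x)))"
    then have "(\<Sum>x<N. real (card (colour_nbhd N c b x))) < (\<Sum>x<N. \<epsilon> * (real N - 1))"
      using \<open>2 \<le> N\<close> by (intro sum_strict_mono) (auto simp: not_le lessThan_empty_iff)
    then show False using sum_ge by simp
  qed
qed

lemma card_mult_card_le_of_colour_nbhd_bounds:
  assumes AB: "A \<subseteq> {0..<N}" "B \<subseteq> {0..<N}"
    and A: "\<And>z. z \<in> A \<Longrightarrow> card (colour_nbhd N c b z \<inter> B) \<le> k"
    and B: "\<And>w. w \<in> B \<Longrightarrow> card (colour_nbhd N c (\<not> b) w \<inter> A) \<le> k"
  shows "card A * card B \<le> card (A \<inter> B) + k * (card A + card B)"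
proof -
  define PA where "PA = Sigma A (\<lambda>z. colour_nbhd N c b z \<inter> B)"
  define PB where "PB = Sigma B (\<lambda>w. colour_nbhd N c (\<not> b) w \<inter> A)"
  have fin: "finite A" "finite B" using AB finite_subset by auto
  have "A \<times> B \<subseteq> (\<lambda>z. (z, z)) ` (A \<inter> B) \<union> PA \<union> prod.swap ` PB"
  proof
    fix p assume "p \<in> A \<times> B"
    then obtain z w where p: "p = (z, w)" "z \<in> A" "w \<in> B" by blast
    then have "z < N" "w < N" using AB by auto
    consider "z = w" | "z \<noteq> w" "c {z, w} = b" | "z \<noteq> w" "c {w, z} = (\<not> b)"
      by (metis insert_commute)
    then show "p \<in> (\<lambda>z. (z, z)) ` (A \<inter> B) \<union> PA \<union> prod.swap ` PB"
      by cases (use p \<open>z < N\<close> \<open>w < N\<close> in \<open>auto simp: PA_def PB_def colour_nbhd_def\<close>)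
  qed
  then have "card (A \<times> B) \<le> card ((\<lambda>z. (z, z)) ` (A \<inter> B) \<union> PA \<union> prod.swap ` PB)"
    using fin by (intro card_mono) (auto simp: PA_def PB_def)
  also have "\<dots> \<le> card ((\<lambda>z. (z, z)) ` (A \<inter> B)) + card PA + card (prod.swap ` PB)"
    by (meson card_Un_le add_right_mono le_trans)
  also have "\<dots> \<le> card (A \<inter> B) + card A * k + card B * k"
  proof (intro add_mono)
    show "card ((\<lambda>z. (z, z)) ` (A \<inter> B)) \<le> card (A \<inter> B)" by (rule card_image_le) (use fin in simp)
    show "card PA \<le> card A * k"
      unfolding PA_def using fin sum_bounded_above[of A _ k] A by simp
    show "card (prod.swap ` PB) \<le> card B * k"
      unfolding PB_def using fin sum_bounded_above[of B _ k] B by (simp add: card_image)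
  qed
  finally show ?thesis by (simp add: card_cartesian_product algebra_simps)
qed

lemma min_le_of_mult_le:
  fixes a b k :: nat
  assumes "a * b \<le> min a b + k * (a + b)"
  shows "min a b \<le> 2 * k + 1"
proof -
  have bound: "a \<le> 2 * k + 1" if "a \<le> b" "a * b \<le> a + k * (a + b)" for a b
  proof -
    have "a * b \<le> a + k * a + k * b" using that(2) by (simp add: distrib_left)
    moreover have "k * a \<le> k * b" using that(1) by simp
    ultimately have "a * b \<le> b + 2 * (k * b)" using that(1) by linarith
    then have "a * b \<le> (2 * k + 1) * b" by (simp add: algebra_simps)
    then show ?thesis
    proof (cases "b = 0")
      case False
      with \<open>a * b \<le> (2 * k + 1) * b\<close> show ?thesis by (metis mult_le_cancel2 gr0I)
    qed (use that(1) in simp)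
  qed
  show ?thesis
  proof (cases "a \<le> b")
    case True
    then show ?thesis using bound[of a b] assms by simp
  next
    case False
    then show ?thesis using bound[of b a] assms by (simp add: algebra_simps)
  qed
qed

lemma min_card_colour_nbhds_less:
  assumes G: "simple_graph V E" "v \<in> V" and no_copy: "\<not> has_mono_copy N c V E"
    and H: "\<And>c. has_mono_copy n c (V - {v}) (del_vertex_edges E v)"
    and "x < N" "y < N"
  shows "min (card (colour_nbhd N c b x)) (card (colour_nbhd N c (\<not> b) y)) < 2 * n"
proof -
  define A where "A = colour_nbhd N c b x"
  define B where "B = colour_nbhd N c (\<not> b) y"
  note small = card_colour_nbhd_Int_less[OF G no_copy H]
  have "0 < n" using small[OF \<open>x < N\<close> \<open>x < N\<close>, of b] by linarith
  have "card A * card B \<le> card (A \<inter> B) + (n - 1) * (card A + card B)"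
  proof (rule card_mult_card_le_of_colour_nbhd_bounds)
    show "A \<subseteq> {0..<N}" "B \<subseteq> {0..<N}" by (auto simp: A_def B_def colour_nbhd_def)
    show "card (colour_nbhd N c b z \<inter> B) \<le> n - 1" if "z \<in> A" for z
      using small[OF \<open>y < N\<close>, of z "\<not> b"] that by (simp add: A_def B_def colour_nbhd_def Int_commute)
    show "card (colour_nbhd N c (\<not> b) w \<inter> A) \<le> n - 1" if "w \<in> B" for w
      using small[OF \<open>x < N\<close>, of w b] that by (simp add: A_def B_def colour_nbhd_def Int_commute)
  qed
  moreover have "card (A \<inter> B) \<le> min (card A) (card B)"
    by (simp add: A_def B_def colour_nbhd_def card_mono)
  ultimately have "card A * card B \<le> min (card A) (card B) + (n - 1) * (card A + card B)"
    by linarith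
  then have "min (card A) (card B) \<le> 2 * (n - 1) + 1" by (rule min_le_of_mult_le)
  then show ?thesis using \<open>0 < n\<close> unfolding A_def B_def by linarith
qed

theorem proposition1p4:
  fixes V :: "'a set" and E :: "'a set set" and v :: 'a and \<epsilon> :: real
  assumes "simple_graph V E"
    and "v \<in> V"
    and "0 < \<epsilon>" and "\<epsilon> \<le> 1/2"
    and "ramsey_balanced \<epsilon> V E"
  shows "real (ramsey_number V E)
           \<le> 4 / \<epsilon> * real (ramsey_number (V - {v}) (del_vertex_edges E v))"
proof -
  define N where "N = ramsey_number V E - 1"
  define n where "n = ramsey_number (V - {v}) (del_vertex_edges E v)"
  obtain c where no_copy: "\<not> has_mono_copy N c V E" and "eps_balanced \<epsilon> N c"
    using assms(5) by (auto simp: ramsey_balanced_def ramsey_colouring_def N_def)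
  then obtain x y where "x < N" "y < N" "2 \<le> N"
    and x: "\<epsilon> * (real N - 1) \<le> card (colour_nbhd N c True x)"
    and y: "\<epsilon> * (real N - 1) \<le> card (colour_nbhd N c False y)"
    using ex_card_colour_nbhd_ge[OF assms(3)] by (metis eps_balanced_def)
  have H: "\<And>c. has_mono_copy n c (V - {v}) (del_vertex_edges E v)"
    unfolding n_def by (intro has_mono_copy_ramsey_number simple_graph_del_vertex assms(1))
  let ?d = "min (card (colour_nbhd N c True x)) (card (colour_nbhd N c False y))"
  have "?d + 1 \<le> 2 * n"
    using min_card_colour_nbhds_less[OF assms(1,2) no_copy H \<open>x < N\<close> \<open>y < N\<close>, of True] by simp
  then have "real ?d + 1 \<le> 2 * real n"
    using of_nat_mono[where 'a=real] by fastforce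
  moreover have "\<epsilon> * (real N - 1) \<le> real ?d"
    using x y by (metis min_def)
  ultimately have "\<epsilon> * (real N - 1) \<le> 2 * real n - 1"
    by linarith
  then have "\<epsilon> * real (N + 1) \<le> 2 * real n"
    using assms(4) by (simp add: algebra_simps)
  then have "real (N + 1) \<le> 2 / \<epsilon> * real n"
    using assms(3) by (simp add: field_simps)
  also have "\<dots> \<le> 4 / \<epsilon> * real n"
    using assms(3) by (simp add: divide_right_mono)
  finally show ?thesis using \<open>2 \<le> N\<close> by (simp add: N_def n_def)
qed

end
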